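(* Let $\Gamma$ be a $\Bbbk$-algebra and $\sim$ an equivalence relation on $\mathrm{cfs}(\Gamma)$. If $0\to U\to V\to W\to0$ is a short exact sequence of $\Gamma$-modules and $V$ is a block module, then $U$ and $W$ are block modules and $\mathrm{Supp}(V)=\mathrm{Supp}(U)\cup\mathrm{Supp}(W)$.
   Context: $\mathrm{cfs}(\Gamma)$: maximal two-sided ideals $\mathfrak m$ of $\Gamma$ with $\dim\Gamma/\mathfrak m<\infty$. For a class $B$, $\mathcal W(B)=\{\mathfrak m_1\cdots\mathfrak m_k:k\ge0,\mathfrak m_i\in B\}$; for a $\Gamma$-module $V$, $V(B)=\{v:\mathfrak m v=0$ for some $\mathfrak m\in\mathcal W(B)\}$. $V$ is a block module if $V=\bigoplus_BV(B)$; $\mathrm{Supp}(V)=\{B:V(B)\neq0\}$. *)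

theory Defs
  imports Complex_Main
begin

text \<open>A (unital, associative) algebra over a field: the ring structure comes from the
  type class ring_1 of the carrier type, and the scalar multiplication sc makes it a
  vector space over the field, compatibly with multiplication.\<close>
definition is_algebra :: "('k::field \<Rightarrow> 'a::ring_1 \<Rightarrow> 'a) \<Rightarrow> bool" where
  "is_algebra sc \<longleftrightarrow> vector_space sc \<and>
     (\<forall>c x y. sc c (x * y) = sc c x * y \<and> sc c (x * y) = x * sc c y)"

definition two_sided_ideal :: "'a::ring_1 set \<Rightarrow> bool" where
  "two_sided_ideal I \<longleftrightarrow> 0 \<in> I \<and> (\<forall>x\<in>I. \<forall>y\<in>I. x + y \<in> I) \<and> (\<forall>x\<in>I. - x \<in> I) \<and>
     (\<forall>x\<in>I. \<forall>r. r * x \<in> I \<and> x * r \<in> I)"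

definition maximal_ideal :: "'a::ring_1 set \<Rightarrow> bool" where
  "maximal_ideal I \<longleftrightarrow> two_sided_ideal I \<and> I \<noteq> UNIV \<and>
     (\<forall>J. two_sided_ideal J \<and> I \<subseteq> J \<longrightarrow> J = I \<or> J = UNIV)"

text \<open>dim_k (Gamma / m) is finite: finitely many elements span Gamma modulo m.\<close>
definition fin_codim :: "('k::field \<Rightarrow> 'a::ring_1 \<Rightarrow> 'a) \<Rightarrow> 'a set \<Rightarrow> bool" where
  "fin_codim sc I \<longleftrightarrow> (\<exists>S. finite S \<and> (\<forall>x. \<exists>s\<in>module.span sc S. x - s \<in> I))"

definition cfs :: "('k::field \<Rightarrow> 'a::ring_1 \<Rightarrow> 'a) \<Rightarrow> 'a set set" where
  "cfs sc = {m. maximal_ideal m \<and> fin_codim sc m}"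

definition ideal_prod :: "'a::ring_1 set \<Rightarrow> 'a set \<Rightarrow> 'a set" where
  "ideal_prod I J = {\<Sum>i<n. f i * g i | (n::nat) f g. \<forall>i<n. f i \<in> I \<and> g i \<in> J}"

fun ideal_prod_list :: "'a::ring_1 set list \<Rightarrow> 'a set" where
  "ideal_prod_list [] = UNIV"
| "ideal_prod_list (m # ms) = ideal_prod m (ideal_prod_list ms)"

definition Wd :: "'a::ring_1 set set \<Rightarrow> 'a set set" where
  "Wd B = {ideal_prod_list ms | ms. set ms \<subseteq> B}"

definition is_module :: "('a::ring_1 \<Rightarrow> 'v::ab_group_add \<Rightarrow> 'v) \<Rightarrow> bool" where
  "is_module act \<longleftrightarrow> (\<forall>a b v. act (a + b) v = act a v + act b v) \<and>
     (\<forall>a v w. act a (v + w) = act a v + act a w) \<and>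
     (\<forall>a b v. act (a * b) v = act a (act b v)) \<and> (\<forall>v. act 1 v = v)"

definition is_module_hom :: "('a::ring_1 \<Rightarrow> 'v::ab_group_add \<Rightarrow> 'v) \<Rightarrow>
    ('a \<Rightarrow> 'w::ab_group_add \<Rightarrow> 'w) \<Rightarrow> ('v \<Rightarrow> 'w) \<Rightarrow> bool" where
  "is_module_hom actV actW f \<longleftrightarrow> (\<forall>v w. f (v + w) = f v + f w) \<and> (\<forall>a v. f (actV a v) = actW a (f v))"

definition block_part :: "('a::ring_1 \<Rightarrow> 'v::ab_group_add \<Rightarrow> 'v) \<Rightarrow> 'a set set \<Rightarrow> 'v set" where
  "block_part act B = {v. \<exists>m\<in>Wd B. \<forall>x\<in>m. act x v = 0}"

definition blocks :: "('k::field \<Rightarrow> 'a::ring_1 \<Rightarrow> 'a) \<Rightarrow> ('a set \<times> 'a set) set \<Rightarrow> 'a set set set" where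
  "blocks sc R = cfs sc // R"

text \<open>V is the (internal) direct sum of the V(B), B ranging over the blocks.\<close>
definition block_module :: "('k::field \<Rightarrow> 'a::ring_1 \<Rightarrow> 'a) \<Rightarrow> ('a set \<times> 'a set) set \<Rightarrow>
    ('a \<Rightarrow> 'v::ab_group_add \<Rightarrow> 'v) \<Rightarrow> bool" where
  "block_module sc R act \<longleftrightarrow>
     (\<forall>v. \<exists>f. finite {B\<in>blocks sc R. f B \<noteq> 0} \<and> (\<forall>B\<in>blocks sc R. f B \<in> block_part act B) \<and>
              v = (\<Sum>B\<in>{B\<in>blocks sc R. f B \<noteq> 0}. f B)) \<and>
     (\<forall>f. finite {B\<in>blocks sc R. f B \<noteq> 0} \<and> (\<forall>B\<in>blocks sc R. f B \<in> block_part act B) \<and>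
              (\<Sum>B\<in>{B\<in>blocks sc R. f B \<noteq> 0}. f B) = 0 \<longrightarrow> (\<forall>B\<in>blocks sc R. f B = 0))"

definition Supp :: "('k::field \<Rightarrow> 'a::ring_1 \<Rightarrow> 'a) \<Rightarrow> ('a set \<times> 'a set) set \<Rightarrow>
    ('a \<Rightarrow> 'v::ab_group_add \<Rightarrow> 'v) \<Rightarrow> 'a set set set" where
  "Supp sc R act = {B\<in>blocks sc R. block_part act B \<noteq> {0}}"

end

(* Distinct blocks are disjoint sets of maximal ideals, so every ideal in W(B) is comaximal
   with every ideal in W(B') when B and B' are distinct blocks. If v in V(B) is killed by m in
   W(B) and s is a finite sum of elements of V(B') over blocks B' other than B, one therefore
   finds a in m with (1 - a) s = 0, and v = a v + (1 - a) v shows that v = s forces v = 0.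
   So in every module the sum of the V(B) is direct, and being a block module only means being
   spanned by the V(B).
   Homomorphisms map V(B) into W(B), and injective ones reflect membership in V(B). Hence the
   image of a decomposition in V is a decomposition in W; and if f u decomposes in V, then g
   kills each component by directness in W, so each component comes from V(B) of U. Directness
   in W also shows that a nonzero element of W(B) is the image of the B-component of any of its
   preimages, whence Supp(W) is contained in Supp(V). *)

theory Submission
  imports Defs
begin

section \<open>Two-sided ideals and their products\<close>

lemma
  assumes "two_sided_ideal I"
  shows two_sided_ideal_zero: "0 \<in> I"
    and two_sided_ideal_add: "x \<in> I \<Longrightarrow> y \<in> I \<Longrightarrow> x + y \<in> I"
    and two_sided_ideal_uminus: "x \<in> I \<Longrightarrow> - x \<in> I"
    and two_sided_ideal_mult_left: "x \<in> I \<Longrightarrow> r * x \<in> I"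
    and two_sided_ideal_mult_right: "x \<in> I \<Longrightarrow> x * r \<in> I"
  using assms unfolding two_sided_ideal_def by blast+

lemma two_sided_ideal_UNIV: "two_sided_ideal UNIV"
  by (simp add: two_sided_ideal_def)

lemma two_sided_ideal_sum:
  assumes "two_sided_ideal I" and "\<And>i. i \<in> A \<Longrightarrow> h i \<in> I"
  shows "sum h A \<in> I"
  using assms(2)
  by (induction A rule: infinite_finite_induct) (use assms(1) in \<open>auto simp: two_sided_ideal_def\<close>)

lemma sum_lessThan_concat:
  "(\<Sum>i<m + (n::nat). if i < m then f i else g (i - m)) = (\<Sum>i<m. f i) + (\<Sum>i<n. g i :: 'b::comm_monoid_add)"
  by (induction n) (simp_all add: add.assoc)

lemma ideal_prod_iff:
  "x \<in> ideal_prod I J \<longleftrightarrow> (\<exists>n f g. x = (\<Sum>i<(n::nat). f i * g i) \<and> (\<forall>i<n. f i \<in> I \<and> g i \<in> J))"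
  unfolding ideal_prod_def by blast

lemma ideal_prodI:
  assumes "\<And>i. i < (n::nat) \<Longrightarrow> f i \<in> I \<and> g i \<in> J"
  shows "(\<Sum>i<n. f i * g i) \<in> ideal_prod I J"
  unfolding ideal_prod_def using assms by blast

lemma ideal_prod_add:
  assumes "x \<in> ideal_prod I J" and "y \<in> ideal_prod I J"
  shows "x + y \<in> ideal_prod I J"
proof -
  obtain m f g where x: "x = (\<Sum>i<(m::nat). f i * g i)" "\<forall>i<m. f i \<in> I \<and> g i \<in> J"
    using assms(1) unfolding ideal_prod_iff by blast
  obtain n f' g' where y: "y = (\<Sum>i<(n::nat). f' i * g' i)" "\<forall>i<n. f' i \<in> I \<and> g' i \<in> J"
    using assms(2) unfolding ideal_prod_iff by blast
  let ?f = "\<lambda>i. if i < m then f i else f' (i - m)" and ?g = "\<lambda>i. if i < m then g i else g' (i - m)"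
  have "x + y = (\<Sum>i<m + n. ?f i * ?g i)"
    unfolding x y sum_lessThan_concat[symmetric] by (rule sum.cong) auto
  also have "\<dots> \<in> ideal_prod I J"
    using x(2) y(2) by (intro ideal_prodI) auto
  finally show ?thesis .
qed

lemma two_sided_ideal_ideal_prod:
  assumes I: "two_sided_ideal I" and J: "two_sided_ideal J"
  shows "two_sided_ideal (ideal_prod I J)"
  unfolding two_sided_ideal_def
proof (intro conjI ballI allI)
  show "0 \<in> ideal_prod I J"
    unfolding ideal_prod_iff by (rule exI[of _ 0]) simp
next
  fix x y assume "x \<in> ideal_prod I J" "y \<in> ideal_prod I J"
  then show "x + y \<in> ideal_prod I J" by (rule ideal_prod_add)
next
  fix x r assume "x \<in> ideal_prod I J"
  then obtain n f g where x: "x = (\<Sum>i<(n::nat). f i * g i)" "\<forall>i<n. f i \<in> I \<and> g i \<in> J"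
    unfolding ideal_prod_iff by blast
  have "(\<Sum>i<n. (- f i) * g i) \<in> ideal_prod I J" "(\<Sum>i<n. (r * f i) * g i) \<in> ideal_prod I J"
    "(\<Sum>i<n. f i * (g i * r)) \<in> ideal_prod I J"
    using x(2) two_sided_ideal_uminus[OF I] two_sided_ideal_mult_left[OF I] two_sided_ideal_mult_right[OF J]
    by (intro ideal_prodI, simp)+
  then show "- x \<in> ideal_prod I J" "r * x \<in> ideal_prod I J" "x * r \<in> ideal_prod I J"
    unfolding x by (simp_all add: sum_negf sum_distrib_left sum_distrib_right mult.assoc)
qed

lemma ideal_prod_subset_right:
  assumes J: "two_sided_ideal J"
  shows "ideal_prod I J \<subseteq> J"
proof
  fix x assume "x \<in> ideal_prod I J"
  then obtain n f g where x: "x = (\<Sum>i<(n::nat). f i * g i)" "\<forall>i<n. f i \<in> I \<and> g i \<in> J"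
    unfolding ideal_prod_iff by blast
  show "x \<in> J"
    unfolding x(1) using x(2) J by (intro two_sided_ideal_sum) (auto simp: two_sided_ideal_def)
qed

lemma ideal_prod_mono_right: "J \<subseteq> J' \<Longrightarrow> ideal_prod I J \<subseteq> ideal_prod I J'"
  unfolding ideal_prod_def by blast

lemma two_sided_ideal_ideal_prod_list:
  "(\<And>m. m \<in> set ms \<Longrightarrow> two_sided_ideal m) \<Longrightarrow> two_sided_ideal (ideal_prod_list ms)"
  by (induction ms) (auto simp: two_sided_ideal_UNIV two_sided_ideal_ideal_prod)

lemma ideal_prod_list_append_subset:
  assumes "\<And>m. m \<in> set ms' \<Longrightarrow> two_sided_ideal m"
  shows "ideal_prod_list (ms @ ms') \<subseteq> ideal_prod_list ms \<inter> ideal_prod_list ms'"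
proof (induction ms)
  case (Cons m ms)
  have "ideal_prod m (ideal_prod_list (ms @ ms')) \<subseteq> ideal_prod m (ideal_prod_list ms)"
    using Cons.IH by (intro ideal_prod_mono_right) blast
  moreover have "ideal_prod m (ideal_prod_list (ms @ ms')) \<subseteq> ideal_prod m (ideal_prod_list ms')"
    using Cons.IH by (intro ideal_prod_mono_right) blast
  moreover have "ideal_prod m (ideal_prod_list ms') \<subseteq> ideal_prod_list ms'"
    using assms by (intro ideal_prod_subset_right two_sided_ideal_ideal_prod_list)
  ultimately show ?case
    by auto
qed simp

lemma maximal_ideal_two_sided: "maximal_ideal p \<Longrightarrow> two_sided_ideal p"
  unfolding maximal_ideal_def by blast

lemma two_sided_ideal_set_plus:
  assumes I: "two_sided_ideal I" and J: "two_sided_ideal J"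
  shows "two_sided_ideal {a + b |a b. a \<in> I \<and> b \<in> J}"
  unfolding two_sided_ideal_def
proof (intro conjI ballI allI)
  show "0 \<in> {a + b |a b. a \<in> I \<and> b \<in> J}"
    using I J unfolding two_sided_ideal_def by force
next
  fix x y assume "x \<in> {a + b |a b. a \<in> I \<and> b \<in> J}" "y \<in> {a + b |a b. a \<in> I \<and> b \<in> J}"
  then obtain a b c d where "x = a + b" "y = c + d" "a \<in> I" "b \<in> J" "c \<in> I" "d \<in> J"
    by blast
  moreover have "x + y = (a + c) + (b + d)"
    using calculation by (simp add: algebra_simps)
  ultimately show "x + y \<in> {a + b |a b. a \<in> I \<and> b \<in> J}"
    using I J unfolding two_sided_ideal_def by blast
next
  fix x r assume "x \<in> {a + b |a b. a \<in> I \<and> b \<in> J}"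
  then obtain a b where ab: "x = a + b" "a \<in> I" "b \<in> J"
    by blast
  have "- x = - a + - b" "r * x = r * a + r * b" "x * r = a * r + b * r"
    using ab by (simp_all add: algebra_simps)
  then show "- x \<in> {a + b |a b. a \<in> I \<and> b \<in> J}" "r * x \<in> {a + b |a b. a \<in> I \<and> b \<in> J}"
    "x * r \<in> {a + b |a b. a \<in> I \<and> b \<in> J}"
    using ab I J unfolding two_sided_ideal_def by blast+
qed

section \<open>Comaximal ideals\<close>

definition comaximal :: "'a::ring_1 set \<Rightarrow> 'a set \<Rightarrow> bool" where
  "comaximal I J \<longleftrightarrow> (\<exists>a\<in>I. \<exists>b\<in>J. a + b = 1)"

lemma comaximal_commute: "comaximal I J \<longleftrightarrow> comaximal J I"
  unfolding comaximal_def by (metis add.commute)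

lemma comaximal_UNIV: "two_sided_ideal I \<Longrightarrow> comaximal I UNIV"
  unfolding comaximal_def two_sided_ideal_def by force

lemma comaximal_ideal_prod:
  assumes I: "two_sided_ideal I" and "comaximal I J" and "comaximal I K"
  shows "comaximal I (ideal_prod J K)"
proof -
  obtain a b where ab: "a \<in> I" "b \<in> J" "a + b = 1"
    using assms(2) unfolding comaximal_def by blast
  obtain a' c where ac: "a' \<in> I" "c \<in> K" "a' + c = 1"
    using assms(3) unfolding comaximal_def by blast
  have "(a * a' + a * c + b * a') + b * c = (a + b) * (a' + c)"
    by (simp add: algebra_simps)
  also have "\<dots> = 1"
    using ab ac by simp
  finally have "(a * a' + a * c + b * a') + b * c = 1" .
  moreover have "a * a' + a * c + b * a' \<in> I"
    using I ab ac unfolding two_sided_ideal_def by blast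
  moreover have "b * c \<in> ideal_prod J K"
    using ideal_prodI[of 1 "\<lambda>_. b" J "\<lambda>_. c" K] ab ac by simp
  ultimately show ?thesis
    unfolding comaximal_def by blast
qed

lemma comaximal_ideal_prod_list:
  assumes "two_sided_ideal I" and "\<And>J. J \<in> set ms \<Longrightarrow> comaximal I J"
  shows "comaximal I (ideal_prod_list ms)"
  using assms(2)
  by (induction ms) (auto intro: comaximal_UNIV comaximal_ideal_prod assms(1))

lemma maximal_ideals_comaximal:
  assumes p: "maximal_ideal p" and q: "maximal_ideal q" and "p \<noteq> q"
  shows "comaximal p q"
proof -
  let ?S = "{a + b |a b. a \<in> p \<and> b \<in> q}"
  have ip: "two_sided_ideal p" and iq: "two_sided_ideal q"
    using p q by (simp_all add: maximal_ideal_two_sided)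
  then have "0 \<in> p" "0 \<in> q"
    by (simp_all add: two_sided_ideal_zero)
  then have "x + 0 \<in> ?S" if "x \<in> p" for x
    using that by blast
  then have "p \<subseteq> ?S"
    by auto
  then have "?S = p \<or> ?S = UNIV"
    using p two_sided_ideal_set_plus[OF ip iq] unfolding maximal_ideal_def by blast
  moreover have "?S \<noteq> p"
  proof
    assume "?S = p"
    then have "q \<subseteq> p"
      using \<open>0 \<in> p\<close> by force
    then have "p = q \<or> p = UNIV"
      using q ip unfolding maximal_ideal_def by blast
    then show False
      using p \<open>p \<noteq> q\<close> unfolding maximal_ideal_def by blast
  qed
  ultimately have "1 \<in> ?S"
    by simp
  then obtain a b where "a \<in> p" "b \<in> q" "a + b = 1"
    by (smt (verit) mem_Collect_eq)
  then show ?thesis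
    unfolding comaximal_def by blast
qed

lemma Wd_UNIV: "UNIV \<in> Wd B"
  unfolding Wd_def by (rule CollectI, rule exI[of _ "[]"]) simp

lemma two_sided_ideal_Wd:
  "(\<And>p. p \<in> B \<Longrightarrow> two_sided_ideal p) \<Longrightarrow> m \<in> Wd B \<Longrightarrow> two_sided_ideal m"
  unfolding Wd_def using two_sided_ideal_ideal_prod_list by blast

lemma Wd_lower_bound:
  assumes "\<And>p. p \<in> B \<Longrightarrow> two_sided_ideal p" and "m \<in> Wd B" and "m' \<in> Wd B"
  shows "\<exists>m''\<in>Wd B. m'' \<subseteq> m \<inter> m'"
proof -
  obtain ms ms' where ms: "m = ideal_prod_list ms" "set ms \<subseteq> B"
    and ms': "m' = ideal_prod_list ms'" "set ms' \<subseteq> B"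
    using assms(2,3) unfolding Wd_def by blast
  have "ideal_prod_list (ms @ ms') \<in> Wd B"
    unfolding Wd_def using ms(2) ms'(2) by (intro CollectI exI[of _ "ms @ ms'"]) auto
  moreover have "ideal_prod_list (ms @ ms') \<subseteq> m \<inter> m'"
    unfolding ms(1) ms'(1) using ms'(2) assms(1) by (intro ideal_prod_list_append_subset) auto
  ultimately show ?thesis
    by blast
qed

lemma Wd_comaximal:
  assumes B: "\<And>p. p \<in> B \<Longrightarrow> maximal_ideal p" and B': "\<And>q. q \<in> B' \<Longrightarrow> maximal_ideal q"
    and "B \<inter> B' = {}" and m: "m \<in> Wd B" and m': "m' \<in> Wd B'"
  shows "comaximal m m'"
proof -
  obtain ms ms' where ms: "m = ideal_prod_list ms" "set ms \<subseteq> B"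
    and ms': "m' = ideal_prod_list ms'" "set ms' \<subseteq> B'"
    using m m' unfolding Wd_def by blast
  have "comaximal p q" if "p \<in> set ms" "q \<in> set ms'" for p q
  proof (rule maximal_ideals_comaximal)
    show "maximal_ideal p" "maximal_ideal q"
      using that ms(2) ms'(2) by (auto intro: B B')
    show "p \<noteq> q"
      using that ms(2) ms'(2) \<open>B \<inter> B' = {}\<close> by auto
  qed
  note pq = this
  have "comaximal p m'" if p: "p \<in> set ms" for p
    unfolding ms'(1)
  proof (rule comaximal_ideal_prod_list)
    show "two_sided_ideal p"
      using p ms(2) by (intro maximal_ideal_two_sided B) auto
    show "comaximal p q" if "q \<in> set ms'" for q
      using p that by (rule pq)
  qed
  moreover have "two_sided_ideal m'"
    using m' by (rule two_sided_ideal_Wd[rotated]) (intro maximal_ideal_two_sided B')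
  ultimately have "comaximal m' m"
    unfolding ms(1) by (intro comaximal_ideal_prod_list) (simp_all add: comaximal_commute)
  then show ?thesis
    by (simp add: comaximal_commute)
qed

section \<open>Block parts of a module\<close>

lemma module_additive: "is_module act \<Longrightarrow> additive (act a)"
  unfolding is_module_def by unfold_locales blast

lemma module_hom_additive: "is_module_hom actV actW f \<Longrightarrow> additive f"
  unfolding is_module_hom_def by unfold_locales blast

lemma zero_in_block_part: "0 \<in> block_part act B" if "is_module act"
proof -
  have "act a 0 = 0" for a
    using that by (rule additive.zero[OF module_additive])
  then show ?thesis
    unfolding block_part_def using Wd_UNIV by blast
qed

lemma block_part_add:
  assumes B: "\<And>p. p \<in> B \<Longrightarrow> two_sided_ideal p" and M: "is_module act"
    and x: "x \<in> block_part act B" and y: "y \<in> block_part act B"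
  shows "x + y \<in> block_part act B"
proof -
  obtain m where m: "m \<in> Wd B" "\<And>a. a \<in> m \<Longrightarrow> act a x = 0"
    using x unfolding block_part_def by blast
  obtain m' where m': "m' \<in> Wd B" "\<And>a. a \<in> m' \<Longrightarrow> act a y = 0"
    using y unfolding block_part_def by blast
  obtain m'' where m'': "m'' \<in> Wd B" "m'' \<subseteq> m \<inter> m'"
    using Wd_lower_bound[OF B m(1) m'(1)] by blast
  have "act a (x + y) = 0" if "a \<in> m''" for a
    using that m(2) m'(2) m''(2) additive.add[OF module_additive[OF M]] by fastforce
  then show ?thesis
    unfolding block_part_def using m''(1) by blast
qed

lemma block_part_uminus:
  assumes M: "is_module act" and x: "x \<in> block_part act B"
  shows "- x \<in> block_part act B"
proof -
  obtain m where m: "m \<in> Wd B" "\<And>a. a \<in> m \<Longrightarrow> act a x = 0"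
    using x unfolding block_part_def by blast
  have "act a (- x) = 0" if "a \<in> m" for a
    using m(2)[OF that] by (simp add: additive.minus[OF module_additive[OF M]])
  then show ?thesis
    unfolding block_part_def using m(1) by blast
qed

lemma block_part_diff:
  assumes "\<And>p. p \<in> B \<Longrightarrow> two_sided_ideal p" and "is_module act"
    and "x \<in> block_part act B" and "y \<in> block_part act B"
  shows "x - y \<in> block_part act B"
  using block_part_add[OF assms(1,2,3) block_part_uminus[OF assms(2,4)]] by simp

lemma module_hom_block_part:
  assumes f: "is_module_hom actV actW f" and x: "x \<in> block_part actV B"
  shows "f x \<in> block_part actW B"
proof -
  obtain m where m: "m \<in> Wd B" "\<And>a. a \<in> m \<Longrightarrow> actV a x = 0"
    using x unfolding block_part_def by blast
  have "actW a (f x) = f (actV a x)" for a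
    using f unfolding is_module_hom_def by simp
  then have "actW a (f x) = 0" if "a \<in> m" for a
    using m(2)[OF that] by (simp add: additive.zero[OF module_hom_additive[OF f]])
  then show ?thesis
    unfolding block_part_def using m(1) by blast
qed

lemma inj_module_hom_block_part_iff:
  assumes f: "is_module_hom actV actW f" and "inj f"
  shows "f x \<in> block_part actW B \<longleftrightarrow> x \<in> block_part actV B"
proof -
  have "actW a (f x) = f (actV a x)" for a
    using f unfolding is_module_hom_def by simp
  moreover have "f v = 0 \<longleftrightarrow> v = 0" for v
    using \<open>inj f\<close> additive.zero[OF module_hom_additive[OF f]] by (metis injD)
  ultimately show ?thesis
    unfolding block_part_def by simp
qed

lemma Supp_iff:
  assumes "is_module act"
  shows "B \<in> Supp sc R act \<longleftrightarrow> B \<in> blocks sc R \<and> (\<exists>x\<in>block_part act B. x \<noteq> 0)"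
  using zero_in_block_part[OF assms] unfolding Supp_def by blast

lemma Supp_subset_inj_module_hom:
  assumes U: "is_module actU" and V: "is_module actV" and f: "is_module_hom actU actV f" "inj f"
  shows "Supp sc R actU \<subseteq> Supp sc R actV"
proof
  fix B assume "B \<in> Supp sc R actU"
  then obtain u where u: "B \<in> blocks sc R" "u \<in> block_part actU B" "u \<noteq> 0"
    using Supp_iff[OF U] by blast
  have "f u \<noteq> 0"
    using u(3) f(2) additive.zero[OF module_hom_additive[OF f(1)]] by (metis injD)
  then show "B \<in> Supp sc R actV"
    using u module_hom_block_part[OF f(1)] Supp_iff[OF V] by blast
qed

lemma Supp_subset_exact:
  assumes "is_module actU" and "is_module actV" and "is_module actW"
    and f: "is_module_hom actU actV f" "inj f" and g: "is_module_hom actV actW g"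
    and "{v. g v = 0} \<subseteq> range f"
  shows "Supp sc R actV \<subseteq> Supp sc R actU \<union> Supp sc R actW"
proof
  fix B assume "B \<in> Supp sc R actV"
  then obtain v where v: "B \<in> blocks sc R" "v \<in> block_part actV B" "v \<noteq> 0"
    using Supp_iff[OF assms(2)] by blast
  show "B \<in> Supp sc R actU \<union> Supp sc R actW"
  proof (cases "g v = 0")
    case True
    then obtain u where u: "v = f u"
      using assms(7) by auto
    then have "u \<in> block_part actU B"
      using v(2) inj_module_hom_block_part_iff[OF f] by simp
    moreover have "u \<noteq> 0"
      using u v(3) additive.zero[OF module_hom_additive[OF f(1)]] by blast
    ultimately have "B \<in> Supp sc R actU"
      using v(1) Supp_iff[OF assms(1)] by blast
    then show ?thesis ..
  next
    case False
    moreover have "g v \<in> block_part actW B"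
      using v(2) by (rule module_hom_block_part[OF g])
    ultimately have "B \<in> Supp sc R actW"
      using v(1) Supp_iff[OF assms(3)] by blast
    then show ?thesis ..
  qed
qed

definition block_sums ::
    "('k::field \<Rightarrow> 'a::ring_1 \<Rightarrow> 'a) \<Rightarrow> ('a set \<times> 'a set) set \<Rightarrow> ('a \<Rightarrow> 'v::ab_group_add \<Rightarrow> 'v) \<Rightarrow> 'v set"
  where "block_sums sc R act =
    {\<Sum>B\<in>S. y B | S y. finite S \<and> S \<subseteq> blocks sc R \<and> (\<forall>B\<in>S. y B \<in> block_part act B)}"

lemma module_hom_block_sums:
  assumes g: "is_module_hom actV actW g" and v: "v \<in> block_sums sc R actV"
  shows "g v \<in> block_sums sc R actW"
proof -
  obtain S y where S: "finite S" "S \<subseteq> blocks sc R" "\<forall>B\<in>S. y B \<in> block_part actV B"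
    and v_eq: "v = (\<Sum>B\<in>S. y B)"
    using v unfolding block_sums_def by blast
  have "g v = (\<Sum>B\<in>S. g (y B))"
    unfolding v_eq by (rule additive.sum[OF module_hom_additive[OF g]])
  moreover have "\<forall>B\<in>S. g (y B) \<in> block_part actW B"
    using S(3) module_hom_block_part[OF g] by blast
  ultimately show ?thesis
    unfolding block_sums_def using S(1,2) by blast
qed

lemma block_sums_UNIV_surj_module_hom:
  assumes g: "is_module_hom actV actW g" "surj g" and V: "block_sums sc R actV = UNIV"
  shows "block_sums sc R actW = UNIV"
proof -
  have "w \<in> block_sums sc R actW" for w
  proof -
    obtain v where "w = g v"
      using surjD[OF g(2)] by blast
    moreover have "v \<in> block_sums sc R actV"
      using V by simp
    ultimately show ?thesis
      using module_hom_block_sums[OF g(1)] by simp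
  qed
  then show ?thesis
    by blast
qed

section \<open>Directness of the sum of the block parts\<close>

context
  fixes sc :: "'k::field \<Rightarrow> 'a::ring_1 \<Rightarrow> 'a" and R :: "('a set \<times> 'a set) set"
  assumes R_equiv: "equiv (cfs sc) R"
begin

lemma maximal_ideal_of_block: "B \<in> blocks sc R \<Longrightarrow> p \<in> B \<Longrightarrow> maximal_ideal p"
  using in_quotient_imp_subset[OF R_equiv] unfolding blocks_def cfs_def by blast

lemma two_sided_ideal_of_block: "B \<in> blocks sc R \<Longrightarrow> p \<in> B \<Longrightarrow> two_sided_ideal p"
  using maximal_ideal_of_block maximal_ideal_two_sided by blast

lemma Wd_blocks_comaximal:
  assumes "B \<in> blocks sc R" "B' \<in> blocks sc R" "B \<noteq> B'" "m \<in> Wd B" "m' \<in> Wd B'"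
  shows "comaximal m m'"
proof (rule Wd_comaximal)
  show "B \<inter> B' = {}"
    using quotient_disj[OF R_equiv] assms(1-3) unfolding blocks_def by blast
qed (use assms maximal_ideal_of_block in auto)

lemma block_part_sum_separated:
  assumes M: "is_module act" and B: "B \<in> blocks sc R" and m: "m \<in> Wd B"
    and "finite S" and "S \<subseteq> blocks sc R - {B}" and "\<And>B'. B' \<in> S \<Longrightarrow> y B' \<in> block_part act B'"
  shows "\<exists>a\<in>m. act (1 - a) (\<Sum>B'\<in>S. y B') = 0"
  using assms(4-6)
proof (induction S rule: finite_induct)
  case empty
  have "0 \<in> m"
    using two_sided_ideal_Wd[OF two_sided_ideal_of_block[OF B] m] by (rule two_sided_ideal_zero)
  moreover have "act 1 0 = 0"
    using M unfolding is_module_def by blast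
  ultimately show ?case
    by (intro bexI[of _ 0]) simp_all
next
  case (insert B' S)
  obtain a where a: "a \<in> m" "act (1 - a) (\<Sum>B'\<in>S. y B') = 0"
    using insert by auto
  have "y B' \<in> block_part act B'"
    using insert.prems(2) by simp
  then obtain m' where m': "m' \<in> Wd B'" "\<And>c. c \<in> m' \<Longrightarrow> act c (y B') = 0"
    unfolding block_part_def by blast
  have "B' \<in> blocks sc R" "B \<noteq> B'"
    using insert.prems(1) by auto
  then obtain a' b where ab: "a' \<in> m" "b \<in> m'" "a' + b = 1"
    using Wd_blocks_comaximal[OF B _ _ m m'(1)] unfolding comaximal_def by blast
  have ideal_m: "two_sided_ideal m"
    using m by (rule two_sided_ideal_Wd[rotated]) (rule two_sided_ideal_of_block[OF B])
  have ideal_m': "two_sided_ideal m'"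
    using m'(1) by (rule two_sided_ideal_Wd[rotated]) (rule two_sided_ideal_of_block[OF \<open>B' \<in> blocks sc R\<close>])
  \<comment> \<open>\<open>1 - (a' + b a) = b (1 - a)\<close> lies in \<open>m'\<close>, which kills \<open>y B'\<close>, and kills the old sum through \<open>1 - a\<close>.\<close>
  have "a' + b * a \<in> m"
    using ab(1) a(1) by (intro two_sided_ideal_add two_sided_ideal_mult_left ideal_m)
  moreover have "1 - (a' + b * a) = b * (1 - a)"
  proof -
    have "a' = 1 - b"
      using ab(3) by (simp add: eq_diff_eq)
    then show ?thesis
      by (simp add: algebra_simps)
  qed
  moreover have "act (b * (1 - a)) (y B') = 0"
    using ab(2) by (intro m'(2) two_sided_ideal_mult_right[OF ideal_m'])
  moreover have "act (b * (1 - a)) (\<Sum>B'\<in>S. y B') = act b (act (1 - a) (\<Sum>B'\<in>S. y B'))"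
    using M unfolding is_module_def by blast
  then have "act (b * (1 - a)) (\<Sum>B'\<in>S. y B') = 0"
    using a(2) additive.zero[OF module_additive[OF M]] by simp
  ultimately have "act (1 - (a' + b * a)) (\<Sum>B'\<in>insert B' S. y B') = 0"
    using insert.hyps additive.add[OF module_additive[OF M]] by simp
  with \<open>a' + b * a \<in> m\<close> show ?case ..
qed

lemma block_part_eq_sum_component:
  assumes M: "is_module act" and B: "B \<in> blocks sc R" and x: "x \<in> block_part act B"
    and S: "finite S" "S \<subseteq> blocks sc R" and y: "\<And>B'. B' \<in> S \<Longrightarrow> y B' \<in> block_part act B'"
    and x_eq: "x = (\<Sum>B'\<in>S. y B')"
  shows "x = (if B \<in> S then y B else 0)"
proof -
  have disjoint: "z = 0"
    if z: "z \<in> block_part act B" and T: "finite T" "T \<subseteq> S - {B}" and z_eq: "z = (\<Sum>B'\<in>T. y B')"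
    for z T
  proof -
    obtain m where m: "m \<in> Wd B" "\<And>a. a \<in> m \<Longrightarrow> act a z = 0"
      using z unfolding block_part_def by blast
    have "\<exists>a\<in>m. act (1 - a) z = 0"
      unfolding z_eq
    proof (rule block_part_sum_separated[OF M B m(1) T(1)])
      show "T \<subseteq> blocks sc R - {B}"
        using T(2) S(2) by blast
      show "y B' \<in> block_part act B'" if "B' \<in> T" for B'
        using that T(2) by (intro y) blast
    qed
    then obtain a where a: "a \<in> m" "act (1 - a) z = 0" ..
    have "z = act (a + (1 - a)) z"
      using M unfolding is_module_def by simp
    also have "\<dots> = act a z + act (1 - a) z"
      using M unfolding is_module_def by blast
    finally show "z = 0"
      using a m(2) by simp
  qed
  show ?thesis
  proof (cases "B \<in> S")
    case True
    have "x - y B = (\<Sum>B'\<in>S - {B}. y B')"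
      unfolding x_eq using sum.remove[OF S(1) True, of y] by simp
    moreover have "x - y B \<in> block_part act B"
      using block_part_diff[OF two_sided_ideal_of_block[OF B] M x y[OF True]] .
    ultimately have "x - y B = 0"
      using S(1) by (intro disjoint) auto
    then show ?thesis
      using True by simp
  next
    case False
    then show ?thesis
      using x S(1) x_eq by (auto intro: disjoint)
  qed
qed

lemma block_parts_independent:
  assumes M: "is_module act" and S: "finite S" "S \<subseteq> blocks sc R"
    and y: "\<And>B. B \<in> S \<Longrightarrow> y B \<in> block_part act B" and "(\<Sum>B\<in>S. y B) = 0" and "B \<in> S"
  shows "y B = 0"
proof -
  have "B \<in> blocks sc R"
    using assms(3,6) by blast
  from block_part_eq_sum_component[OF M this zero_in_block_part[OF M] S y] show ?thesis
    using assms(5,6) by simp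
qed

lemma block_module_iff_block_sums:
  assumes M: "is_module act"
  shows "block_module sc R act \<longleftrightarrow> block_sums sc R act = UNIV"
proof
  assume "block_module sc R act"
  have "v \<in> block_sums sc R act" for v
  proof -
    obtain F where F: "finite {B\<in>blocks sc R. F B \<noteq> 0}" "\<forall>B\<in>blocks sc R. F B \<in> block_part act B"
      "v = (\<Sum>B\<in>{B\<in>blocks sc R. F B \<noteq> 0}. F B)"
      using \<open>block_module sc R act\<close> unfolding block_module_def by blast
    then show ?thesis
      unfolding block_sums_def by (intro CollectI exI[of _ "{B\<in>blocks sc R. F B \<noteq> 0}"] exI[of _ F]) auto
  qed
  then show "block_sums sc R act = UNIV"
    by blast
next
  assume spans: "block_sums sc R act = UNIV"
  have "\<exists>F. finite {B\<in>blocks sc R. F B \<noteq> 0} \<and> (\<forall>B\<in>blocks sc R. F B \<in> block_part act B) \<and>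
      v = (\<Sum>B\<in>{B\<in>blocks sc R. F B \<noteq> 0}. F B)" for v
  proof -
    have "v \<in> block_sums sc R act"
      using spans by simp
    then obtain S y where S: "finite S" "S \<subseteq> blocks sc R" "\<forall>B\<in>S. y B \<in> block_part act B"
      and v: "v = (\<Sum>B\<in>S. y B)"
      unfolding block_sums_def by blast
    define F where "F B = (if B \<in> S then y B else 0)" for B
    have supp: "{B\<in>blocks sc R. F B \<noteq> 0} \<subseteq> S"
      unfolding F_def by auto
    have "(\<Sum>B\<in>{B\<in>blocks sc R. F B \<noteq> 0}. F B) = (\<Sum>B\<in>S. F B)"
      using S(1,2) supp by (intro sum.mono_neutral_left) auto
    also have "\<dots> = v"
      unfolding v F_def by simp
    finally have "v = (\<Sum>B\<in>{B\<in>blocks sc R. F B \<noteq> 0}. F B)" ..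
    moreover have "\<forall>B\<in>blocks sc R. F B \<in> block_part act B"
      using S(3) zero_in_block_part[OF M] unfolding F_def by simp
    ultimately show ?thesis
      using finite_subset[OF supp S(1)] by blast
  qed
  moreover have "\<forall>B\<in>blocks sc R. F B = 0"
    if "finite {B\<in>blocks sc R. F B \<noteq> 0} \<and> (\<forall>B\<in>blocks sc R. F B \<in> block_part act B) \<and>
      (\<Sum>B\<in>{B\<in>blocks sc R. F B \<noteq> 0}. F B) = 0" for F
  proof
    fix B assume "B \<in> blocks sc R"
    show "F B = 0"
    proof (cases "F B = 0")
      case False
      then show ?thesis
        using that \<open>B \<in> blocks sc R\<close>
        by (intro block_parts_independent[OF M, of "{B\<in>blocks sc R. F B \<noteq> 0}" F]) auto
    qed
  qed
  ultimately show "block_module sc R act"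
    unfolding block_module_def by (intro conjI allI impI)
qed

lemma block_sums_UNIV_submodule:
  assumes W: "is_module actW" and f: "is_module_hom actU actV f" "inj f"
    and g: "is_module_hom actV actW g" and exact: "range f = {v. g v = 0}"
    and V: "block_sums sc R actV = UNIV"
  shows "block_sums sc R actU = UNIV"
proof -
  have "u \<in> block_sums sc R actU" for u
  proof -
    have "f u \<in> block_sums sc R actV"
      using V by simp
    then obtain S y where S: "finite S" "S \<subseteq> blocks sc R" "\<forall>B\<in>S. y B \<in> block_part actV B"
      and fu: "f u = (\<Sum>B\<in>S. y B)"
      unfolding block_sums_def by blast
    have "(\<Sum>B\<in>S. g (y B)) = g (f u)"
      unfolding fu by (rule additive.sum[OF module_hom_additive[OF g], symmetric])
    also have "\<dots> = 0"
      using rangeI[of f u] unfolding exact by simp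
    finally have sum_zero: "(\<Sum>B\<in>S. g (y B)) = 0" .
    have "g (y B) = 0" if "B \<in> S" for B
    proof (rule block_parts_independent[OF W S(1,2) _ sum_zero that])
      show "g (y B') \<in> block_part actW B'" if "B' \<in> S" for B'
        using S(3) that by (intro module_hom_block_part[OF g]) simp
    qed
    then have "y B \<in> range f" if "B \<in> S" for B
      unfolding exact using that by simp
    then have k: "f (inv f (y B)) = y B" if "B \<in> S" for B
      using that by (simp add: f_inv_into_f)
    have "inv f (y B) \<in> block_part actU B" if "B \<in> S" for B
      using S(3) that k[OF that] by (simp flip: inj_module_hom_block_part_iff[OF f])
    moreover have "f u = f (\<Sum>B\<in>S. inv f (y B))"
      unfolding fu additive.sum[OF module_hom_additive[OF f(1)]] using k by simp
    then have "u = (\<Sum>B\<in>S. inv f (y B))"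
      by (rule injD[OF f(2)])
    ultimately show ?thesis
      unfolding block_sums_def using S(1,2) by blast
  qed
  then show ?thesis
    by blast
qed

lemma Supp_subset_surj_module_hom:
  assumes V: "is_module actV" and W: "is_module actW" and g: "is_module_hom actV actW g" "surj g"
    and spans: "block_sums sc R actV = UNIV"
  shows "Supp sc R actW \<subseteq> Supp sc R actV"
proof
  fix B assume "B \<in> Supp sc R actW"
  then obtain w where w: "B \<in> blocks sc R" "w \<in> block_part actW B" "w \<noteq> 0"
    using Supp_iff[OF W] by blast
  obtain v where "w = g v"
    using surjD[OF g(2)] by blast
  have "v \<in> block_sums sc R actV"
    using spans by simp
  then obtain S y where S: "finite S" "S \<subseteq> blocks sc R" "\<forall>B\<in>S. y B \<in> block_part actV B"
    and v: "v = (\<Sum>B\<in>S. y B)"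
    unfolding block_sums_def by blast
  have w_sum: "w = (\<Sum>B\<in>S. g (y B))"
    unfolding \<open>w = g v\<close> v by (rule additive.sum[OF module_hom_additive[OF g(1)]])
  have component: "w = (if B \<in> S then g (y B) else 0)"
  proof (rule block_part_eq_sum_component[OF W w(1,2) S(1,2) _ w_sum])
    show "g (y B') \<in> block_part actW B'" if "B' \<in> S" for B'
      using S(3) that by (intro module_hom_block_part[OF g(1)]) simp
  qed
  have "B \<in> S"
    using component w(3) by presburger
  then have "g (y B) \<noteq> 0"
    using component w(3) by simp
  then have "y B \<noteq> 0"
    using additive.zero[OF module_hom_additive[OF g(1)]] by auto
  moreover have "y B \<in> block_part actV B"
    using S(3) \<open>B \<in> S\<close> by simp
  ultimately show "B \<in> Supp sc R actV"
    using Supp_iff[OF V] w(1) by blast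
qed

end

theorem mainTheorem7:
  fixes sc :: "'k::field \<Rightarrow> 'a::ring_1 \<Rightarrow> 'a"
    and R :: "('a set \<times> 'a set) set"
    and actU :: "'a \<Rightarrow> 'u::ab_group_add \<Rightarrow> 'u"
    and actV :: "'a \<Rightarrow> 'v::ab_group_add \<Rightarrow> 'v"
    and actW :: "'a \<Rightarrow> 'w::ab_group_add \<Rightarrow> 'w"
    and f :: "'u \<Rightarrow> 'v" and g :: "'v \<Rightarrow> 'w"
  assumes "is_algebra sc"
    and "equiv (cfs sc) R"
    and "is_module actU" and "is_module actV" and "is_module actW"
    and "is_module_hom actU actV f" and "is_module_hom actV actW g"
    and "inj f" and "surj g" and "range f = {v. g v = 0}"
    and "block_module sc R actV"
  shows "block_module sc R actU \<and> block_module sc R actW \<and>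
         Supp sc R actV = Supp sc R actU \<union> Supp sc R actW"
proof -
  have V: "block_sums sc R actV = UNIV"
    using block_module_iff_block_sums[OF assms(2,4)] assms(11) by blast
  have "block_sums sc R actU = UNIV"
    using block_sums_UNIV_submodule[OF assms(2,5,6,8,7,10) V] .
  then have U: "block_module sc R actU"
    using block_module_iff_block_sums[OF assms(2,3)] by blast
  have "block_sums sc R actW = UNIV"
    using block_sums_UNIV_surj_module_hom[OF assms(7,9) V] .
  then have W: "block_module sc R actW"
    using block_module_iff_block_sums[OF assms(2,5)] by blast
  have "Supp sc R actU \<subseteq> Supp sc R actV"
    using Supp_subset_inj_module_hom[OF assms(3,4,6,8)] .
  moreover have "Supp sc R actW \<subseteq> Supp sc R actV"
    using Supp_subset_surj_module_hom[OF assms(2,4,5,7,9) V] .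
  moreover have "Supp sc R actV \<subseteq> Supp sc R actU \<union> Supp sc R actW"
    using assms(10) by (intro Supp_subset_exact[OF assms(3-6,8,7)]) simp
  ultimately show ?thesis
    using U W by blast
qed

end
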